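(* For every signed composition $\alpha=(a_1,\dots,a_k)$ of $n$, $$X_{\{0\}}\cdot\widetilde{S}_\alpha=X^0_{|\alpha|},$$ where the product is taken in $\mathbb{Q}B_n$.
   Context: $B_n$: signed permutations $w=w_1\dots w_n$ (bijections of $\{\pm1,\dots,\pm n\}$ with $w(-i)=-w(i)$), product in $\mathbb{Q}B_n$ given by composition $(uv)(i)=u(v(i))$; values ordered $\cdots<-2<-1<1<2<\cdots$, $w_0=0$; $\mathrm{Des}(w)=\{i\in\{0,\dots,n-1\}:w_i>w_{i+1}\}$; $X_J=\sum_{\mathrm{Des}(w)\subseteq J}w$. So $X_{\{0\}}$ is the sum of all $w$ with $w_1<\dots<w_n$. A signed composition of $n$ is a sequence $\alpha=(a_1,\dots,a_k)$ of nonzero integers with $\sum|a_i|=n$; $|\alpha|=(|a_1|,\dots,|a_k|)$. $\widetilde{S}_\alpha$ is the sum of all $w\in B_n$ such that, on each of the successive intervals of $[n]$ of lengths $|a_1|,\dots,|a_k|$, the entries $w_j$ are increasing and all have the sign of the corresponding $a_i$. For an ordinary composition $\beta=(b_1,\dots,b_h)$ of $n$, with associated subset $J_\beta=\{b_1,b_1+b_2,\dots,b_1+\dots+b_{h-1}\}\subseteq[n-1]$, $X^0_\beta=X_{\{0\}\cup J_\beta}$. *)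

theory Defs
  imports Complex_Main
begin

text \<open>A signed permutation w of [n] is encoded by its window list [w_1, ..., w_n] of
nonzero integers whose absolute values are exactly 1..n.
Elements of the group algebra QB_n are functions from such lists to rat (zero outside B_n).\<close>

definition signed_perms :: "nat \<Rightarrow> int list set" where
  "signed_perms n = {w. length w = n \<and> set (map abs w) = {1..int n}}"

definition sp_apply :: "int list \<Rightarrow> int \<Rightarrow> int" where
  "sp_apply w x = (if x = 0 then 0 else sgn x * w ! (nat \<bar>x\<bar> - 1))"

definition sp_comp :: "int list \<Rightarrow> int list \<Rightarrow> int list" where
  "sp_comp u v = map (sp_apply u) v"

definition qb_mult :: "nat \<Rightarrow> (int list \<Rightarrow> rat) \<Rightarrow> (int list \<Rightarrow> rat) \<Rightarrow> (int list \<Rightarrow> rat)" where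
  "qb_mult n f g = (\<lambda>w. \<Sum>(u, v) \<in> signed_perms n \<times> signed_perms n.
                         if sp_comp u v = w then f u * g v else 0)"

definition wpos :: "int list \<Rightarrow> nat \<Rightarrow> int" where
  "wpos w i = (if i = 0 then 0 else w ! (i - 1))"

definition Des :: "nat \<Rightarrow> int list \<Rightarrow> nat set" where
  "Des n w = {i \<in> {0..<n}. wpos w i > wpos w (Suc i)}"

definition X :: "nat \<Rightarrow> nat set \<Rightarrow> (int list \<Rightarrow> rat)" where
  "X n J = (\<lambda>w. if w \<in> signed_perms n \<and> Des n w \<subseteq> J then 1 else 0)"

definition signed_composition :: "nat \<Rightarrow> int list \<Rightarrow> bool" where
  "signed_composition n \<alpha> \<longleftrightarrow> (\<forall>a \<in> set \<alpha>. a \<noteq> 0) \<and> (\<Sum>a\<leftarrow>\<alpha>. \<bar>a\<bar>) = int n"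

definition abs_comp :: "int list \<Rightarrow> nat list" where
  "abs_comp \<alpha> = map (\<lambda>a. nat \<bar>a\<bar>) \<alpha>"

definition psum :: "nat list \<Rightarrow> nat \<Rightarrow> nat" where
  "psum \<beta> i = sum_list (take i \<beta>)"

definition Jcomp :: "nat list \<Rightarrow> nat set" where
  "Jcomp \<beta> = {psum \<beta> i | i. 1 \<le> i \<and> i < length \<beta>}"

definition X0 :: "nat \<Rightarrow> nat list \<Rightarrow> (int list \<Rightarrow> rat)" where
  "X0 n \<beta> = X n ({0} \<union> Jcomp \<beta>)"

definition Stilde :: "nat \<Rightarrow> int list \<Rightarrow> (int list \<Rightarrow> rat)" where
  "Stilde n \<alpha> = (\<lambda>w. if w \<in> signed_perms n \<and>
      (\<forall>i < length \<alpha>. \<forall>j.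
         psum (abs_comp \<alpha>) i < j \<and> j \<le> psum (abs_comp \<alpha>) (Suc i) \<longrightarrow>
           sgn (wpos w j) = sgn (\<alpha> ! i) \<and>
           (j < psum (abs_comp \<alpha>) (Suc i) \<longrightarrow> wpos w j < wpos w (Suc j)))
    then 1 else 0)"

end

theory Submission
  imports Defs
begin

(* Let \<epsilon> be the sign vector of \<alpha> and J the set of boundaries between its blocks.
   The product counts pairs (u, v) with u increasing, v in the support of S-tilde and u v = w,
   and (u, v) \<mapsto> u v is a bijection from these pairs onto the support of X0.
   It maps into that support because an increasing u preserves the order of entries of equal sign,
   so every ascent of v inside a block is an ascent of u v.  It is injective because
   u v = w forces the values of u to be the numbers \<epsilon>_k w_k, and an increasing u is determined by
   its set of values; then v = u^-1 w.  For surjectivity take u to be the increasing arrangement of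
   the \<epsilon>_k w_k and v = u^-1 w.  Then v has sign vector \<epsilon>, and it ascends wherever w does
   inside a block, since u^-1 is monotone on values of a fixed sign. *)

lemma psum_0 [simp]: "psum \<beta> 0 = 0"
  by (simp add: psum_def)

lemma psum_Cons_Suc [simp]: "psum (b # \<beta>) (Suc i) = b + psum \<beta> i"
  by (simp add: psum_def)

lemma psum_mono: "i \<le> k \<Longrightarrow> psum \<beta> i \<le> psum \<beta> k"
  unfolding psum_def by (metis le_add1 le_add_diff_inverse sum_list_append take_add)

lemma psum_le_sum_list: "psum \<beta> i \<le> sum_list \<beta>"
  unfolding psum_def by (metis append_take_drop_id le_add1 sum_list_append)

lemma ex_block_containing:
  "k < sum_list \<beta> \<Longrightarrow> \<exists>i<length \<beta>. psum \<beta> i \<le> k \<and> k < psum \<beta> (Suc i)"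
proof (induction \<beta> arbitrary: k)
  case (Cons b \<beta>)
  show ?case
  proof (cases "k < b")
    case True
    then show ?thesis by (intro exI[of _ 0]) simp
  next
    case False
    with Cons.prems have "k - b < sum_list \<beta>" by simp
    with Cons.IH obtain i where "i < length \<beta>" "psum \<beta> i \<le> k - b" "k - b < psum \<beta> (Suc i)"
      by blast
    with False show ?thesis by (intro exI[of _ "Suc i"]) auto
  qed
qed simp

lemma not_in_Jcomp_iff:
  assumes "0 < j" "j < sum_list \<beta>"
  shows "j \<notin> Jcomp \<beta> \<longleftrightarrow> (\<exists>i<length \<beta>. psum \<beta> i < j \<and> j < psum \<beta> (Suc i))"
proof
  assume "j \<notin> Jcomp \<beta>"
  obtain i where i: "i < length \<beta>" "psum \<beta> i \<le> j" "j < psum \<beta> (Suc i)"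
    using ex_block_containing[OF assms(2)] by blast
  have "psum \<beta> i \<noteq> j"
  proof
    assume "psum \<beta> i = j"
    with assms(1) have "1 \<le> i" by (cases i) auto
    with i \<open>psum \<beta> i = j\<close> have "j \<in> Jcomp \<beta>" by (auto simp: Jcomp_def)
    with \<open>j \<notin> Jcomp \<beta>\<close> show False by simp
  qed
  with i show "\<exists>i<length \<beta>. psum \<beta> i < j \<and> j < psum \<beta> (Suc i)" by auto
next
  assume "\<exists>i<length \<beta>. psum \<beta> i < j \<and> j < psum \<beta> (Suc i)"
  then obtain i where i: "psum \<beta> i < j" "j < psum \<beta> (Suc i)" by blast
  show "j \<notin> Jcomp \<beta>"
  proof
    assume "j \<in> Jcomp \<beta>"
    then obtain m where "j = psum \<beta> m" by (auto simp: Jcomp_def)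
    with i psum_mono[of m i \<beta>] psum_mono[of "Suc i" m \<beta>] show False by linarith
  qed
qed

lemma length_abs_comp [simp]: "length (abs_comp \<alpha>) = length \<alpha>"
  by (simp add: abs_comp_def)

lemma sum_list_abs_comp:
  assumes "signed_composition n \<alpha>"
  shows "sum_list (abs_comp \<alpha>) = n"
proof -
  have "int (sum_list (abs_comp \<alpha>)) = (\<Sum>a\<leftarrow>\<alpha>. \<bar>a\<bar>)"
    by (induction \<alpha>) (simp_all add: abs_comp_def)
  with assms show ?thesis by (simp add: signed_composition_def)
qed

definition block_signs :: "int list \<Rightarrow> int list" where
  "block_signs \<alpha> = concat (map (\<lambda>a. replicate (nat \<bar>a\<bar>) (sgn a)) \<alpha>)"

lemma length_block_signs: "length (block_signs \<alpha>) = sum_list (abs_comp \<alpha>)"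
  by (induction \<alpha>) (simp_all add: block_signs_def abs_comp_def)

lemma block_signs_nth:
  "i < length \<alpha> \<Longrightarrow> psum (abs_comp \<alpha>) i \<le> k \<Longrightarrow> k < psum (abs_comp \<alpha>) (Suc i) \<Longrightarrow>
   block_signs \<alpha> ! k = sgn (\<alpha> ! i)"
proof (induction \<alpha> arbitrary: i k)
  case (Cons a \<alpha>)
  have "block_signs (a # \<alpha>) = replicate (nat \<bar>a\<bar>) (sgn a) @ block_signs \<alpha>"
    by (simp add: block_signs_def)
  with Cons show ?case
    by (cases i) (auto simp: abs_comp_def nth_append)
qed simp

section \<open>Signed permutations\<close>

lemma signed_perms_iff:
  "w \<in> signed_perms n \<longleftrightarrow>
     length w = n \<and> distinct (map abs w) \<and> (\<forall>x\<in>set w. x \<noteq> 0 \<and> \<bar>x\<bar> \<le> int n)"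
proof
  assume w: "w \<in> signed_perms n"
  then have abs_w: "set (map abs w) = {1..int n}" and "length w = n"
    by (simp_all add: signed_perms_def)
  moreover have "x \<noteq> 0 \<and> \<bar>x\<bar> \<le> int n" if "x \<in> set w" for x
  proof -
    have "\<bar>x\<bar> \<in> {1..int n}" using that abs_w by auto
    then show ?thesis by auto
  qed
  ultimately show "length w = n \<and> distinct (map abs w) \<and> (\<forall>x\<in>set w. x \<noteq> 0 \<and> \<bar>x\<bar> \<le> int n)"
    by (auto intro: card_distinct)
next
  assume w: "length w = n \<and> distinct (map abs w) \<and> (\<forall>x\<in>set w. x \<noteq> 0 \<and> \<bar>x\<bar> \<le> int n)"
  then have "set (map abs w) \<subseteq> {1..int n}" by force
  moreover have "card (set (map abs w)) = card {1..int n}"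
    using w distinct_card by fastforce
  ultimately have "set (map abs w) = {1..int n}" by (intro card_subset_eq) auto
  with w show "w \<in> signed_perms n" by (simp add: signed_perms_def)
qed

lemma signed_perms_length: "w \<in> signed_perms n \<Longrightarrow> length w = n"
  by (simp add: signed_perms_def)

lemma signed_perms_distinct: "w \<in> signed_perms n \<Longrightarrow> distinct w"
  using signed_perms_iff distinct_map by blast

lemma signed_perms_entry: "w \<in> signed_perms n \<Longrightarrow> x \<in> set w \<Longrightarrow> x \<noteq> 0 \<and> \<bar>x\<bar> \<le> int n"
  by (simp add: signed_perms_iff)

lemma finite_signed_perms: "finite (signed_perms n)"
proof (rule finite_subset)
  show "signed_perms n \<subseteq> {w. set w \<subseteq> {-int n..int n} \<and> length w = n}"
    by (force simp: signed_perms_iff)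
qed (rule finite_lists_length_eq, simp)

lemma abs_sp_apply: "x \<noteq> 0 \<Longrightarrow> \<bar>sp_apply u x\<bar> = \<bar>u ! (nat \<bar>x\<bar> - 1)\<bar>"
  by (simp add: sp_apply_def abs_mult)

lemma sgn_mult_sp_apply: "x \<noteq> 0 \<Longrightarrow> sgn x * sp_apply u x = u ! (nat \<bar>x\<bar> - 1)"
  by (simp add: sp_apply_def sgn_if)

lemma inj_on_abs_nth:
  assumes "u \<in> signed_perms n"
  shows "inj_on (\<lambda>k. \<bar>u ! (nat k - 1)\<bar>) {1..int n}"
proof (rule inj_onI)
  fix k l assume "k \<in> {1..int n}" "l \<in> {1..int n}" "\<bar>u ! (nat k - 1)\<bar> = \<bar>u ! (nat l - 1)\<bar>"
  moreover have "nat k - 1 < length u" "nat l - 1 < length u"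
    using \<open>k \<in> {1..int n}\<close> \<open>l \<in> {1..int n}\<close> assms by (auto simp: signed_perms_length)
  ultimately have "map abs u ! (nat k - 1) = map abs u ! (nat l - 1)" by simp
  with assms \<open>nat k - 1 < length u\<close> \<open>nat l - 1 < length u\<close> have "nat k - 1 = nat l - 1"
    by (simp add: signed_perms_iff nth_eq_iff_index_eq del: nth_map)
  with \<open>k \<in> {1..int n}\<close> \<open>l \<in> {1..int n}\<close> show "k = l" by auto
qed

lemma sp_comp_closed:
  assumes u: "u \<in> signed_perms n" and v: "v \<in> signed_perms n"
  shows "sp_comp u v \<in> signed_perms n"
proof -
  have abs_v: "set (map abs v) = {1..int n}" using v by (simp add: signed_perms_def)
  have "map abs (sp_comp u v) = map (\<lambda>k. \<bar>u ! (nat k - 1)\<bar>) (map abs v)"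
    using v by (auto simp: sp_comp_def signed_perms_iff abs_sp_apply)
  moreover have "distinct (map (\<lambda>k. \<bar>u ! (nat k - 1)\<bar>) (map abs v))"
    using v inj_on_abs_nth[OF u] abs_v by (simp add: signed_perms_iff distinct_map comp_inj_on)
  ultimately have "distinct (map abs (sp_comp u v))" by simp
  moreover have "x \<noteq> 0 \<and> \<bar>x\<bar> \<le> int n" if "x \<in> set (sp_comp u v)" for x
  proof -
    from that obtain y where y: "y \<in> set v" "x = sp_apply u y" by (auto simp: sp_comp_def)
    with v have "nat \<bar>y\<bar> - 1 < n" by (force simp: signed_perms_iff)
    with u have "u ! (nat \<bar>y\<bar> - 1) \<in> set u" by (simp add: signed_perms_length)
    with u have "u ! (nat \<bar>y\<bar> - 1) \<noteq> 0 \<and> \<bar>u ! (nat \<bar>y\<bar> - 1)\<bar> \<le> int n"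
      by (rule signed_perms_entry)
    moreover have "y \<noteq> 0" using signed_perms_entry[OF v y(1)] by simp
    ultimately show ?thesis using y(2) by (simp add: sp_apply_def abs_mult sgn_0_0)
  qed
  ultimately show ?thesis using v by (auto simp: signed_perms_iff sp_comp_def)
qed

lemma sp_apply_inj_on:
  assumes "u \<in> signed_perms n"
  shows "inj_on (sp_apply u) {x. x \<noteq> 0 \<and> \<bar>x\<bar> \<le> int n}"
proof (rule inj_onI)
  fix x y
  assume x: "x \<in> {x. x \<noteq> 0 \<and> \<bar>x\<bar> \<le> int n}" and y: "y \<in> {x. x \<noteq> 0 \<and> \<bar>x\<bar> \<le> int n}"
    and eq: "sp_apply u x = sp_apply u y"
  have "\<bar>u ! (nat \<bar>x\<bar> - 1)\<bar> = \<bar>u ! (nat \<bar>y\<bar> - 1)\<bar>"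
    using eq abs_sp_apply[of x u] abs_sp_apply[of y u] x y by simp
  moreover have "\<bar>x\<bar> \<in> {1..int n}" "\<bar>y\<bar> \<in> {1..int n}" using x y by auto
  ultimately have abs_eq: "\<bar>x\<bar> = \<bar>y\<bar>"
    using inj_on_abs_nth[OF assms] by (auto dest: inj_onD)
  have "u ! (nat \<bar>x\<bar> - 1) \<noteq> 0"
    using x assms by (auto simp: signed_perms_iff)
  with eq abs_eq x y have "sgn x = sgn y" by (simp add: sp_apply_def)
  with abs_eq show "x = y" by (metis sgn_mult_abs)
qed

lemma sp_comp_left_cancel:
  assumes "u \<in> signed_perms n" "v \<in> signed_perms n" "v' \<in> signed_perms n"
    and "sp_comp u v = sp_comp u v'"
  shows "v = v'"
proof (rule map_inj_on)
  show "map (sp_apply u) v = map (sp_apply u) v'" using assms(4) by (simp add: sp_comp_def)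
  show "inj_on (sp_apply u) (set v \<union> set v')"
    by (rule inj_on_subset[OF sp_apply_inj_on[OF assms(1)]])
       (use assms(2,3) in \<open>auto simp: signed_perms_iff\<close>)
qed

lemma sp_apply_strict_mono:
  assumes "u \<in> signed_perms n" "sorted_wrt (<) u"
    and "x \<noteq> 0" "\<bar>x\<bar> \<le> int n" "\<bar>y\<bar> \<le> int n" "x < y" "sgn x = sgn y"
  shows "sp_apply u x < sp_apply u y"
proof (cases "0 < x")
  case True
  with assms have "nat x - 1 < nat y - 1" "nat y - 1 < length u"
    by (auto simp: signed_perms_length)
  from sorted_wrt_nth_less[OF assms(2) this] True assms show ?thesis
    by (simp add: sp_apply_def sgn_if split: if_splits)
next
  case False
  with assms have "nat (- y) - 1 < nat (- x) - 1" "nat (- x) - 1 < length u"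
    by (auto simp: signed_perms_length sgn_if split: if_splits)
  from sorted_wrt_nth_less[OF assms(2) this] False assms show ?thesis
    by (simp add: sp_apply_def sgn_if split: if_splits)
qed

lemma image_nat_minus_1_atLeastAtMost: "(\<lambda>k. nat k - 1) ` {1..int n} = {..<n}"
proof
  show "{..<n} \<subseteq> (\<lambda>k. nat k - 1) ` {1..int n}"
  proof
    fix i assume "i \<in> {..<n}"
    then show "i \<in> (\<lambda>k. nat k - 1) ` {1..int n}"
      by (intro image_eqI[of _ _ "int i + 1"]) auto
  qed
qed auto

lemma signs_mult_sp_comp:
  assumes u: "u \<in> signed_perms n" and v: "v \<in> signed_perms n"
  shows "set (map2 (*) (map sgn v) (sp_comp u v)) = set u"
proof -
  have "map2 (*) (map sgn v) (sp_comp u v) = map (\<lambda>x. u ! (nat \<bar>x\<bar> - 1)) v"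
    using signed_perms_entry[OF v] by (simp add: sp_comp_def map2_map_map sgn_mult_sp_apply)
  then have "set (map2 (*) (map sgn v) (sp_comp u v)) = (!) u ` (\<lambda>k. nat k - 1) ` abs ` set v"
    by (simp add: image_image)
  also have "abs ` set v = {1..int n}" using v by (simp add: signed_perms_def)
  also have "(\<lambda>k. nat k - 1) ` {1..int n} = {..<n}" by (rule image_nat_minus_1_atLeastAtMost)
  also have "(!) u ` {..<n} = set u"
    using u by (auto simp: signed_perms_length in_set_conv_nth)
  finally show ?thesis .
qed

lemma signed_perms_right_factor:
  assumes u: "u \<in> signed_perms n" and uv: "sp_comp u v \<in> signed_perms n"
    and v: "\<forall>x\<in>set v. x \<noteq> 0 \<and> \<bar>x\<bar> \<le> int n"
  shows "v \<in> signed_perms n"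
proof -
  have "map abs (sp_comp u v) = map (\<lambda>k. \<bar>u ! (nat k - 1)\<bar>) (map abs v)"
    using v by (simp add: sp_comp_def abs_sp_apply)
  moreover have "distinct (map abs (sp_comp u v))" using uv by (simp add: signed_perms_iff)
  ultimately have "distinct (map abs v)" by (metis distinct_map)
  moreover have "length v = n" using signed_perms_length[OF uv] by (simp add: sp_comp_def)
  ultimately show ?thesis using v by (simp add: signed_perms_iff)
qed

lemma inv_into_nth:
  assumes "x \<in> set u"
  shows "inv_into {..<length u} ((!) u) x < length u" "u ! inv_into {..<length u} ((!) u) x = x"
proof -
  have x: "x \<in> (!) u ` {..<length u}" using assms by (auto simp: in_set_conv_nth)
  show "inv_into {..<length u} ((!) u) x < length u" using inv_into_into[OF x] by simp
  show "u ! inv_into {..<length u} ((!) u) x = x" using f_inv_into_f[OF x] .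
qed

lemma strict_sorted_inv_into_nth_less:
  fixes u :: "'a::linorder list"
  assumes u: "sorted_wrt (<) u" and xy: "x \<in> set u" "y \<in> set u" "x < y"
  shows "inv_into {..<length u} ((!) u) x < inv_into {..<length u} ((!) u) y"
proof (rule ccontr)
  let ?pos = "inv_into {..<length u} ((!) u)"
  assume "\<not> ?pos x < ?pos y"
  with inv_into_nth[OF xy(1)] have "u ! ?pos y \<le> u ! ?pos x"
    by (intro sorted_nth_mono[OF strict_sorted_imp_sorted[OF u]]) auto
  with xy inv_into_nth(2)[OF xy(1)] inv_into_nth(2)[OF xy(2)] show False by simp
qed

section \<open>Descent classes\<close>

text \<open>The list index k is the position Suc k of the paper, so the condition on the pair
  w ! k, w ! Suc k excludes a descent at position Suc k.\<close>

definition ascends_outside :: "nat set \<Rightarrow> int list \<Rightarrow> bool" where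
  "ascends_outside J w \<longleftrightarrow> (\<forall>k. Suc k < length w \<longrightarrow> Suc k \<notin> J \<longrightarrow> w ! k < w ! Suc k)"

definition ascending_perms :: "nat \<Rightarrow> nat set \<Rightarrow> int list set" where
  "ascending_perms n J = {w \<in> signed_perms n. ascends_outside J w}"

definition signed_ascending_perms :: "nat \<Rightarrow> int list \<Rightarrow> nat set \<Rightarrow> int list set" where
  "signed_ascending_perms n \<epsilon> J = {v \<in> ascending_perms n J. map sgn v = \<epsilon>}"

lemma ascends_outside_empty_iff: "ascends_outside {} w \<longleftrightarrow> sorted_wrt (<) w"
  by (simp add: ascends_outside_def sorted_wrt_iff_nth_Suc_transp)

lemma X_insert_0: "X n (insert 0 J) = (\<lambda>w. of_bool (w \<in> ascending_perms n J))"
proof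
  fix w
  show "X n (insert 0 J) w = of_bool (w \<in> ascending_perms n J)"
  proof (cases "w \<in> signed_perms n")
    case True
    then have len: "length w = n" by (rule signed_perms_length)
    have "Des n w \<subseteq> insert 0 J \<longleftrightarrow> (\<forall>k. Suc k < n \<longrightarrow> Suc k \<notin> J \<longrightarrow> \<not> w ! Suc k < w ! k)"
      by (auto simp: Des_def wpos_def subset_iff gr0_conv_Suc)
    also have "\<dots> \<longleftrightarrow> ascends_outside J w"
    proof -
      have "w ! k \<noteq> w ! Suc k" if "Suc k < n" for k
        using signed_perms_distinct[OF True] len that by (simp add: nth_eq_iff_index_eq)
      then show ?thesis using le_neq_trans by (auto simp: ascends_outside_def len not_less)
    qed
    finally show ?thesis using True by (simp add: X_def ascending_perms_def)
  qed (simp add: X_def ascending_perms_def)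
qed

lemma signs_ascends_if_blocks:
  assumes \<alpha>: "signed_composition n \<alpha>" and len: "length v = n"
    and blocks: "\<And>i k. i < length \<alpha> \<Longrightarrow>
      psum (abs_comp \<alpha>) i \<le> k \<Longrightarrow> k < psum (abs_comp \<alpha>) (Suc i) \<Longrightarrow>
      sgn (v ! k) = sgn (\<alpha> ! i) \<and> (Suc k < psum (abs_comp \<alpha>) (Suc i) \<longrightarrow> v ! k < v ! Suc k)"
  shows "map sgn v = block_signs \<alpha> \<and> ascends_outside (Jcomp (abs_comp \<alpha>)) v"
proof
  have sum: "sum_list (abs_comp \<alpha>) = n" using \<alpha> by (rule sum_list_abs_comp)
  show "map sgn v = block_signs \<alpha>"
  proof (rule nth_equalityI)
    show "length (map sgn v) = length (block_signs \<alpha>)"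
      using len sum by (simp add: length_block_signs)
    fix k assume "k < length (map sgn v)"
    with len sum obtain i where "i < length \<alpha>" "psum (abs_comp \<alpha>) i \<le> k" "k < psum (abs_comp \<alpha>) (Suc i)"
      using ex_block_containing[of k "abs_comp \<alpha>"] by auto
    with blocks \<open>k < length (map sgn v)\<close> show "map sgn v ! k = block_signs \<alpha> ! k"
      by (simp add: block_signs_nth)
  qed
  show "ascends_outside (Jcomp (abs_comp \<alpha>)) v"
    unfolding ascends_outside_def
  proof (intro allI impI)
    fix k assume "Suc k < length v" "Suc k \<notin> Jcomp (abs_comp \<alpha>)"
    with len sum obtain i where "i < length \<alpha>" "psum (abs_comp \<alpha>) i < Suc k" "Suc k < psum (abs_comp \<alpha>) (Suc i)"
      using not_in_Jcomp_iff[of "Suc k" "abs_comp \<alpha>"] by auto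
    with blocks show "v ! k < v ! Suc k" by simp
  qed
qed

lemma blocks_if_signs_ascends:
  assumes \<alpha>: "signed_composition n \<alpha>" and len: "length v = n"
    and signs: "map sgn v = block_signs \<alpha>" and asc: "ascends_outside (Jcomp (abs_comp \<alpha>)) v"
    and i: "i < length \<alpha>" and k: "psum (abs_comp \<alpha>) i \<le> k" "k < psum (abs_comp \<alpha>) (Suc i)"
  shows "sgn (v ! k) = sgn (\<alpha> ! i) \<and> (Suc k < psum (abs_comp \<alpha>) (Suc i) \<longrightarrow> v ! k < v ! Suc k)"
proof
  have sum: "sum_list (abs_comp \<alpha>) = n" using \<alpha> by (rule sum_list_abs_comp)
  then have "k < n" using k psum_le_sum_list[of "abs_comp \<alpha>" "Suc i"] by simp
  then have "sgn (v ! k) = block_signs \<alpha> ! k" using signs len by (metis nth_map)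
  with i k show "sgn (v ! k) = sgn (\<alpha> ! i)" by (simp add: block_signs_nth)
  show "Suc k < psum (abs_comp \<alpha>) (Suc i) \<longrightarrow> v ! k < v ! Suc k"
  proof
    assume "Suc k < psum (abs_comp \<alpha>) (Suc i)"
    with i k sum have "Suc k \<notin> Jcomp (abs_comp \<alpha>)" "Suc k < length v"
      using not_in_Jcomp_iff[of "Suc k" "abs_comp \<alpha>"] psum_le_sum_list[of "abs_comp \<alpha>" "Suc i"] len
      by auto
    with asc show "v ! k < v ! Suc k" by (simp add: ascends_outside_def)
  qed
qed

lemma Stilde_eq:
  assumes \<alpha>: "signed_composition n \<alpha>"
  shows "Stilde n \<alpha> =
    (\<lambda>v. of_bool (v \<in> signed_ascending_perms n (block_signs \<alpha>) (Jcomp (abs_comp \<alpha>))))"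
proof
  fix v
  let ?\<beta> = "abs_comp \<alpha>"
  let ?blocks = "\<forall>i<length \<alpha>. \<forall>j. psum ?\<beta> i < j \<and> j \<le> psum ?\<beta> (Suc i) \<longrightarrow>
    sgn (wpos v j) = sgn (\<alpha> ! i) \<and> (j < psum ?\<beta> (Suc i) \<longrightarrow> wpos v j < wpos v (Suc j))"
  have "?blocks \<longleftrightarrow> map sgn v = block_signs \<alpha> \<and> ascends_outside (Jcomp ?\<beta>) v" if len: "length v = n"
  proof
    assume ?blocks
    from this[rule_format, of _ "Suc _"] show "map sgn v = block_signs \<alpha> \<and> ascends_outside (Jcomp ?\<beta>) v"
      by (intro signs_ascends_if_blocks[OF \<alpha> len]) (simp add: wpos_def)
  next
    assume "map sgn v = block_signs \<alpha> \<and> ascends_outside (Jcomp ?\<beta>) v"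
    then have signs_asc: "map sgn v = block_signs \<alpha>" "ascends_outside (Jcomp ?\<beta>) v" by auto
    show ?blocks
    proof (intro allI impI)
      fix i j assume i: "i < length \<alpha>" and j: "psum ?\<beta> i < j \<and> j \<le> psum ?\<beta> (Suc i)"
      then obtain k where "j = Suc k" by (cases j) auto
      with blocks_if_signs_ascends[OF \<alpha> len signs_asc i, of k] j
      show "sgn (wpos v j) = sgn (\<alpha> ! i) \<and> (j < psum ?\<beta> (Suc i) \<longrightarrow> wpos v j < wpos v (Suc j))"
        by (simp add: wpos_def)
    qed
  qed
  then show "Stilde n \<alpha> v = of_bool (v \<in> signed_ascending_perms n (block_signs \<alpha>) (Jcomp ?\<beta>))"
    by (auto simp: Stilde_def signed_ascending_perms_def ascending_perms_def signed_perms_length)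
qed

lemma sorted_list_of_set_in_ascending_perms:
  assumes t: "t \<in> signed_perms n"
  shows "sorted_list_of_set (set t) \<in> ascending_perms n {}"
proof -
  let ?u = "sorted_list_of_set (set t)"
  have "distinct (map abs t)" using t by (simp add: signed_perms_iff)
  then have "distinct (map abs ?u)" by (simp add: distinct_map)
  moreover have "length ?u = n"
    using t by (simp add: distinct_card signed_perms_distinct signed_perms_length)
  ultimately have "?u \<in> signed_perms n"
    using t by (simp add: signed_perms_iff)
  then show ?thesis
    by (simp add: ascending_perms_def ascends_outside_empty_iff)
qed

section \<open>Factorisation through increasing signed permutations\<close>

text \<open>An abstraction of a signed composition: \<epsilon> is its sign vector and J the set of its
  block boundaries.\<close>

locale sign_pattern =
  fixes n :: nat and \<epsilon> :: "int list" and J :: "nat set"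
  assumes length_signs: "length \<epsilon> = n"
    and signs_unit: "set \<epsilon> \<subseteq> {-1, 1}"
    and signs_constant: "\<And>k. Suc k < n \<Longrightarrow> Suc k \<notin> J \<Longrightarrow> \<epsilon> ! k = \<epsilon> ! Suc k"
begin

lemma sign_cases: "k < n \<Longrightarrow> \<epsilon> ! k = 1 \<or> \<epsilon> ! k = -1"
  using signs_unit nth_mem[of k \<epsilon>] length_signs by blast

lemma sp_comp_mem:
  assumes u: "u \<in> ascending_perms n {}" and v: "v \<in> signed_ascending_perms n \<epsilon> J"
  shows "sp_comp u v \<in> ascending_perms n J"
proof -
  have u_perm: "u \<in> signed_perms n" and u_sorted: "sorted_wrt (<) u"
    using u by (simp_all add: ascending_perms_def ascends_outside_empty_iff)
  have v_perm: "v \<in> signed_perms n" and signs: "map sgn v = \<epsilon>" and v_asc: "ascends_outside J v"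
    using v by (simp_all add: signed_ascending_perms_def ascending_perms_def)
  have "sp_apply u (v ! k) < sp_apply u (v ! Suc k)" if k: "Suc k < n" "Suc k \<notin> J" for k
  proof (rule sp_apply_strict_mono[OF u_perm u_sorted])
    have "sgn (v ! k) = \<epsilon> ! k" "sgn (v ! Suc k) = \<epsilon> ! Suc k"
      using signs k v_perm by (auto simp: signed_perms_length)
    then show "sgn (v ! k) = sgn (v ! Suc k)" using signs_constant[OF k] by simp
    show "v ! k < v ! Suc k" using v_asc k v_perm by (simp add: ascends_outside_def signed_perms_length)
    show "v ! k \<noteq> 0" "\<bar>v ! k\<bar> \<le> int n" "\<bar>v ! Suc k\<bar> \<le> int n"
      using k signed_perms_entry[OF v_perm] v_perm by (auto simp: signed_perms_length)
  qed
  then show ?thesis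
    using sp_comp_closed[OF u_perm v_perm] v_perm
    by (simp add: ascending_perms_def ascends_outside_def sp_comp_def signed_perms_length)
qed

lemma inj_on_sp_comp:
  "inj_on (\<lambda>(u, v). sp_comp u v) (ascending_perms n {} \<times> signed_ascending_perms n \<epsilon> J)"
proof (rule inj_onI, clarify)
  fix u v u' v'
  assume u: "u \<in> ascending_perms n {}" and u': "u' \<in> ascending_perms n {}"
    and v: "v \<in> signed_ascending_perms n \<epsilon> J" and v': "v' \<in> signed_ascending_perms n \<epsilon> J"
    and eq: "sp_comp u v = sp_comp u' v'"
  have perms: "u \<in> signed_perms n" "u' \<in> signed_perms n" "v \<in> signed_perms n" "v' \<in> signed_perms n"
    using u u' v v' by (simp_all add: signed_ascending_perms_def ascending_perms_def)
  have "map sgn v = map sgn v'" using v v' by (simp add: signed_ascending_perms_def)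
  then have "set u = set u'"
    using signs_mult_sp_comp[of u n v] signs_mult_sp_comp[of u' n v'] perms eq by simp
  then have "u = u'"
    using u u' strict_sorted_equal[of u' u] by (simp add: ascending_perms_def ascends_outside_empty_iff)
  with eq perms show "u = u' \<and> v = v'" by (blast intro: sp_comp_left_cancel)
qed

lemma signs_mult_signed_perms:
  assumes w: "w \<in> signed_perms n"
  shows "map2 (*) \<epsilon> w \<in> signed_perms n"
proof -
  have abs_eq: "map abs (map2 (*) \<epsilon> w) = map abs w"
  proof (rule nth_equalityI)
    show "length (map abs (map2 (*) \<epsilon> w)) = length (map abs w)"
      using w length_signs by (simp add: signed_perms_length)
    fix k assume "k < length (map abs (map2 (*) \<epsilon> w))"
    with sign_cases[of k] length_signs show "map abs (map2 (*) \<epsilon> w) ! k = map abs w ! k"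
      by (auto simp: abs_mult)
  qed
  have "length (map2 (*) \<epsilon> w) = n" using w length_signs by (simp add: signed_perms_length)
  moreover have "set (map abs (map2 (*) \<epsilon> w)) = {1..int n}"
    using w by (simp only: abs_eq signed_perms_def mem_Collect_eq)
  ultimately show ?thesis by (simp only: signed_perms_def mem_Collect_eq)
qed

text \<open>For u whose values are the \<epsilon> ! k * w ! k, this is u^-1 w: its k-th entry has sign
  \<epsilon> ! k and absolute value the position of \<epsilon> ! k * w ! k in u.\<close>

definition right_factor :: "int list \<Rightarrow> int list \<Rightarrow> int list" where
  "right_factor u w =
     map (\<lambda>k. \<epsilon> ! k * int (Suc (inv_into {..<length u} ((!) u) (\<epsilon> ! k * w ! k)))) [0..<n]"

lemma signs_mult_nth_mem:
  assumes "w \<in> signed_perms n" "set u = set (map2 (*) \<epsilon> w)" "k < n"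
  shows "\<epsilon> ! k * w ! k \<in> set u"
  using assms length_signs by (force simp: signed_perms_length set_zip)

lemma sgn_right_factor: "map sgn (right_factor u w) = \<epsilon>"
proof (rule nth_equalityI)
  show "length (map sgn (right_factor u w)) = length \<epsilon>"
    by (simp add: right_factor_def length_signs)
  fix k assume "k < length (map sgn (right_factor u w))"
  then have "k < n" by (simp add: right_factor_def)
  with sign_cases[OF this] show "map sgn (right_factor u w) ! k = \<epsilon> ! k"
    by (auto simp: right_factor_def sgn_mult)
qed

lemma sp_comp_right_factor:
  assumes u: "u \<in> signed_perms n" and w: "w \<in> signed_perms n"
    and set_u: "set u = set (map2 (*) \<epsilon> w)"
  shows "sp_comp u (right_factor u w) = w"
proof (rule nth_equalityI)
  show "length (sp_comp u (right_factor u w)) = length w"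
    using w by (simp add: sp_comp_def right_factor_def signed_perms_length)
  fix k assume "k < length (sp_comp u (right_factor u w))"
  then have k: "k < n" by (simp add: sp_comp_def right_factor_def)
  note mem = inv_into_nth[OF signs_mult_nth_mem[OF w set_u k]]
  have "sp_apply u (right_factor u w ! k) = \<epsilon> ! k * (\<epsilon> ! k * w ! k)"
    using sign_cases[OF k] mem k by (auto simp: right_factor_def sp_apply_def nat_add_distrib)
  with sign_cases[OF k] k show "sp_comp u (right_factor u w) ! k = w ! k"
    by (auto simp: sp_comp_def right_factor_def)
qed

lemma right_factor_in_signed_perms:
  assumes u: "u \<in> signed_perms n" and w: "w \<in> signed_perms n"
    and set_u: "set u = set (map2 (*) \<epsilon> w)"
  shows "right_factor u w \<in> signed_perms n"
proof (rule signed_perms_right_factor[OF u])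
  show "sp_comp u (right_factor u w) \<in> signed_perms n"
    using sp_comp_right_factor[OF assms] w by simp
  have "inv_into {..<length u} ((!) u) (\<epsilon> ! k * w ! k) < n" if "k < n" for k
    using inv_into_nth(1)[OF signs_mult_nth_mem[OF w set_u that]] u by (simp add: signed_perms_length)
  then show "\<forall>x\<in>set (right_factor u w). x \<noteq> 0 \<and> \<bar>x\<bar> \<le> int n"
    using sign_cases by (force simp: right_factor_def abs_mult)
qed

lemma ascends_outside_right_factor:
  assumes u: "u \<in> ascending_perms n {}" and w: "w \<in> ascending_perms n J"
    and set_u: "set u = set (map2 (*) \<epsilon> w)"
  shows "ascends_outside J (right_factor u w)"
  unfolding ascends_outside_def
proof (intro allI impI)
  have u_sorted: "sorted_wrt (<) u"
    using u by (simp add: ascending_perms_def ascends_outside_empty_iff)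
  have w_perm: "w \<in> signed_perms n" and w_asc: "ascends_outside J w"
    using w by (simp_all add: ascending_perms_def)
  let ?t = "\<lambda>k. \<epsilon> ! k * w ! k"
  fix k assume "Suc k < length (right_factor u w)" "Suc k \<notin> J"
  then have k: "Suc k < n" "Suc k \<notin> J" by (simp_all add: right_factor_def)
  have mem: "?t k \<in> set u" "?t (Suc k) \<in> set u"
    using signs_mult_nth_mem[OF w_perm set_u] k by auto
  have "w ! k < w ! Suc k" using w_asc k w_perm by (simp add: ascends_outside_def signed_perms_length)
  with sign_cases[of k] signs_constant[OF k]
  consider "?t k < ?t (Suc k)" "\<epsilon> ! k = 1" | "?t (Suc k) < ?t k" "\<epsilon> ! k = -1"
    using k by fastforce
  then show "right_factor u w ! k < right_factor u w ! Suc k"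
  proof cases
    case 1
    with strict_sorted_inv_into_nth_less[OF u_sorted mem 1(1)] k signs_constant[OF k]
    show ?thesis by (simp add: right_factor_def)
  next
    case 2
    with strict_sorted_inv_into_nth_less[OF u_sorted mem(2,1) 2(1)] k signs_constant[OF k]
    show ?thesis by (simp add: right_factor_def)
  qed
qed

lemma sp_comp_surj:
  assumes w: "w \<in> ascending_perms n J"
  shows "\<exists>u \<in> ascending_perms n {}. \<exists>v \<in> signed_ascending_perms n \<epsilon> J. sp_comp u v = w"
proof -
  have w_perm: "w \<in> signed_perms n" using w by (simp add: ascending_perms_def)
  define u where "u = sorted_list_of_set (set (map2 (*) \<epsilon> w))"
  have u: "u \<in> ascending_perms n {}"
    unfolding u_def by (rule sorted_list_of_set_in_ascending_perms[OF signs_mult_signed_perms[OF w_perm]])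
  then have u_perm: "u \<in> signed_perms n" by (simp add: ascending_perms_def)
  have set_u: "set u = set (map2 (*) \<epsilon> w)" by (simp add: u_def)
  have "right_factor u w \<in> signed_ascending_perms n \<epsilon> J"
    using right_factor_in_signed_perms[OF u_perm w_perm set_u] sgn_right_factor
      ascends_outside_right_factor[OF u w set_u]
    by (simp add: signed_ascending_perms_def ascending_perms_def)
  with u sp_comp_right_factor[OF u_perm w_perm set_u] show ?thesis by blast
qed

theorem bij_betw_sp_comp:
  "bij_betw (\<lambda>(u, v). sp_comp u v)
     (ascending_perms n {} \<times> signed_ascending_perms n \<epsilon> J) (ascending_perms n J)"
  unfolding bij_betw_def using inj_on_sp_comp sp_comp_mem sp_comp_surj by fastforce

end

lemma sign_pattern_block_signs:
  assumes \<alpha>: "signed_composition n \<alpha>"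
  shows "sign_pattern n (block_signs \<alpha>) (Jcomp (abs_comp \<alpha>))"
proof
  show "length (block_signs \<alpha>) = n"
    using \<alpha> by (simp add: length_block_signs sum_list_abs_comp)
  show "set (block_signs \<alpha>) \<subseteq> {-1, 1}"
    using \<alpha> by (auto simp: block_signs_def signed_composition_def sgn_if split: if_splits)
  fix k assume k: "Suc k < n" "Suc k \<notin> Jcomp (abs_comp \<alpha>)"
  then obtain i where "i < length \<alpha>"
    "psum (abs_comp \<alpha>) i < Suc k" "Suc k < psum (abs_comp \<alpha>) (Suc i)"
    using not_in_Jcomp_iff[of "Suc k" "abs_comp \<alpha>"] sum_list_abs_comp[OF \<alpha>] by auto
  then show "block_signs \<alpha> ! k = block_signs \<alpha> ! Suc k"
    by (simp add: block_signs_nth)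
qed

lemma card_fiber_bij_betw:
  assumes "bij_betw f A B"
  shows "card {x \<in> A. f x = y} = of_bool (y \<in> B)"
proof (cases "y \<in> B")
  case True
  then obtain x where "x \<in> A" "f x = y" using assms by (auto simp: bij_betw_def)
  with assms have "{x \<in> A. f x = y} = {x}" by (auto simp: bij_betw_def dest: inj_onD)
  with True show ?thesis by simp
next
  case False
  then have "{x \<in> A. f x = y} = {}" using assms by (auto simp: bij_betw_def)
  with False show ?thesis by (simp only: card.empty of_bool_eq)
qed

lemma qb_mult_of_bool:
  assumes "A \<subseteq> signed_perms n" "B \<subseteq> signed_perms n"
  shows "qb_mult n (\<lambda>u. of_bool (u \<in> A)) (\<lambda>v. of_bool (v \<in> B)) w =
    of_nat (card {p \<in> A \<times> B. (\<lambda>(u, v). sp_comp u v) p = w})"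
proof -
  let ?S = "signed_perms n \<times> signed_perms n"
  have "qb_mult n (\<lambda>u. of_bool (u \<in> A)) (\<lambda>v. of_bool (v \<in> B)) w =
      (\<Sum>p\<in>?S. of_bool (p \<in> A \<times> B \<and> (\<lambda>(u, v). sp_comp u v) p = w))"
    unfolding qb_mult_def by (rule sum.cong) (auto split: if_splits)
  also have "\<dots> = of_nat (card (?S \<inter> {p. p \<in> A \<times> B \<and> (\<lambda>(u, v). sp_comp u v) p = w}))"
    using finite_signed_perms by simp
  also have "?S \<inter> {p. p \<in> A \<times> B \<and> (\<lambda>(u, v). sp_comp u v) p = w} =
      {p \<in> A \<times> B. (\<lambda>(u, v). sp_comp u v) p = w}"
    using assms by blast
  finally show ?thesis .
qed

theorem proposition7p6:
  fixes n :: nat and \<alpha> :: "int list"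
  assumes "signed_composition n \<alpha>"
  shows "qb_mult n (X n {0}) (Stilde n \<alpha>) = X0 n (abs_comp \<alpha>)"
proof -
  let ?\<epsilon> = "block_signs \<alpha>" and ?J = "Jcomp (abs_comp \<alpha>)"
  interpret sign_pattern n ?\<epsilon> ?J
    using assms by (rule sign_pattern_block_signs)
  have X_0: "X n {0} = (\<lambda>u. of_bool (u \<in> ascending_perms n {}))"
    using X_insert_0[of n "{}"] by simp
  have subsets: "ascending_perms n {} \<subseteq> signed_perms n" "signed_ascending_perms n ?\<epsilon> ?J \<subseteq> signed_perms n"
    by (auto simp: ascending_perms_def signed_ascending_perms_def)
  show ?thesis
  proof
    fix w
    have "qb_mult n (X n {0}) (Stilde n \<alpha>) w =
        of_nat (card {p \<in> ascending_perms n {} \<times> signed_ascending_perms n ?\<epsilon> ?J.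
                        (\<lambda>(u, v). sp_comp u v) p = w})"
      unfolding X_0 Stilde_eq[OF assms] by (rule qb_mult_of_bool[OF subsets])
    also have "\<dots> = of_bool (w \<in> ascending_perms n ?J)"
      by (simp only: card_fiber_bij_betw[OF bij_betw_sp_comp] of_nat_of_bool)
    also have "\<dots> = X0 n (abs_comp \<alpha>) w"
      by (simp add: X0_def X_insert_0)
    finally show "qb_mult n (X n {0}) (Stilde n \<alpha>) w = X0 n (abs_comp \<alpha>) w" .
  qed
qed

end
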